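(* Let $F$ be a finite field, let $f,g,q\in F[\lambda]$ with $f,g$ relatively prime and $q=\sum_{i=0}^m q_i\lambda^i$ monic and irreducible, and let $Q=\mathfrak p_q(g,f):=\sum_{i=0}^m q_i f^i g^{m-i}$, assumed nonzero. Let $L$ be the splitting field of $q$ over $F$ and $\alpha\in L$ a root of $q$. Then $Q$ is irreducible over $F$ if and only if $f-\alpha g$ is irreducible over $L$.
   Context: $\mathfrak p_q(g,f)=g^{\deg q}q(f/g)$. *)

theory Defs
  imports "HOL-Computational_Algebra.Computational_Algebra"
begin

definition frak_p :: "'a::comm_ring_1 poly \<Rightarrow> 'a poly \<Rightarrow> 'a poly \<Rightarrow> 'a poly" where
  "frak_p q g f = (\<Sum>i\<le>degree q. smult (coeff q i) (f ^ i * g ^ (degree q - i)))"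

definition field_embedding :: "('a::field \<Rightarrow> 'b::field) \<Rightarrow> bool" where
  "field_embedding \<phi> \<longleftrightarrow> \<phi> 1 = 1 \<and> (\<forall>x y. \<phi> (x + y) = \<phi> x + \<phi> y) \<and> (\<forall>x y. \<phi> (x * y) = \<phi> x * \<phi> y)"

definition is_subfield :: "'b::field set \<Rightarrow> bool" where
  "is_subfield K \<longleftrightarrow> 0 \<in> K \<and> 1 \<in> K \<and> (\<forall>x\<in>K. \<forall>y\<in>K. x + y \<in> K \<and> x * y \<in> K)
     \<and> (\<forall>x\<in>K. - x \<in> K \<and> inverse x \<in> K)"

definition is_splitting_field :: "('a::field \<Rightarrow> 'b::field) \<Rightarrow> 'a poly \<Rightarrow> bool" where
  "is_splitting_field \<phi> q \<longleftrightarrow> field_embedding \<phi> \<and>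
     (\<exists>c rs. map_poly \<phi> q = smult c (\<Prod>r\<leftarrow>rs. [:- r, 1:])) \<and>
     (\<forall>K. is_subfield K \<and> range \<phi> \<subseteq> K \<and> {x. poly (map_poly \<phi> q) x = 0} \<subseteq> K \<longrightarrow> K = UNIV)"

end

theory Submission
  imports Defs "Berlekamp_Zassenhaus.Finite_Field"
begin

(* Let \<sigma> x = x ^ |F| be the Frobenius of L over F and m = deg q. The roots of q in L are the m
  distinct conjugates \<sigma>^k(\<alpha>), so over L the homogenization factors as
    Q = \<Prod>k<m. (f - \<sigma>^k(\<alpha>) g) = \<Prod>k<m. \<sigma>^k(h),   where h = f - \<alpha> g;
  that is, Q is the norm N(h) of h. Since \<sigma>^m is the identity on the splitting field, every norm
  N(A) is \<sigma>-invariant and hence defined over F, so a factorization h = A B yields the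
  factorization Q = N(A) N(B) over F, with degrees multiplied by m. Conversely, the conjugates
  \<sigma>^k(h) are pairwise coprime because f and g are coprime and the \<sigma>^k(\<alpha>) are distinct; so if
  h is irreducible and divides a factor of Q = A B over F, then all its conjugates, and hence
  their product Q, divide that factor. *)

hide_const (open) up_ring.coeff up_ring.monom module.smult

section \<open>Homogenization\<close>

definition homogenize :: "nat \<Rightarrow> 'a::comm_ring_1 poly \<Rightarrow> 'a poly \<Rightarrow> 'a poly \<Rightarrow> 'a poly" where
  "homogenize d p g f = (\<Sum>i\<le>d. smult (coeff p i) (f ^ i * g ^ (d - i)))"

lemma frak_p_eq_homogenize: "frak_p p g f = homogenize (degree p) p g f"
  unfolding frak_p_def homogenize_def ..

lemma homogenize_diff: "homogenize d (p - r) g f = homogenize d p g f - homogenize d r g f"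
  unfolding homogenize_def by (simp add: smult_diff_left sum_subtractf)

lemma homogenize_smult: "homogenize d (smult c p) g f = smult c (homogenize d p g f)"
  unfolding homogenize_def by (simp add: smult_sum2)

lemma homogenize_pCons_0: "homogenize (Suc d) (pCons 0 p) g f = f * homogenize d p g f"
  unfolding homogenize_def
  by (subst sum.atMost_Suc_shift) (simp add: sum_distrib_left mult_ac)

lemma homogenize_Suc:
  assumes "degree p \<le> d"
  shows "homogenize (Suc d) p g f = g * homogenize d p g f"
proof -
  have "homogenize (Suc d) p g f = (\<Sum>i\<le>d. smult (coeff p i) (f ^ i * g ^ (Suc d - i)))"
    unfolding homogenize_def using assms by (simp add: coeff_eq_0)
  also have "\<dots> = (\<Sum>i\<le>d. g * smult (coeff p i) (f ^ i * g ^ (d - i)))"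
    by (intro sum.cong refl) (simp add: Suc_diff_le mult_ac)
  finally show ?thesis
    unfolding homogenize_def by (simp add: sum_distrib_left)
qed

lemma homogenize_linear_factor:
  assumes "degree p \<le> d"
  shows "homogenize (Suc d) ([:-c, 1:] * p) g f = (f - smult c g) * homogenize d p g f"
proof -
  have "[:-c, 1:] * p = pCons 0 p - smult c p"
    by simp
  then show ?thesis
    by (simp add: homogenize_diff homogenize_smult homogenize_pCons_0 homogenize_Suc[OF assms]
        algebra_simps)
qed

lemma degree_prod_linear_factors: "degree (\<Prod>k<n. [:- c k, 1:] :: 'a::idom poly) = n"
  by (subst degree_prod_eq_sum_degree) auto

lemma frak_p_prod_linear_factors:
  fixes c :: "nat \<Rightarrow> 'a::idom"
  shows "frak_p (\<Prod>k<n. [:- c k, 1:]) g f = (\<Prod>k<n. f - smult (c k) g)"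
proof (induction n)
  case 0
  show ?case by (simp add: frak_p_def)
next
  case (Suc n)
  have "frak_p (\<Prod>k<Suc n. [:- c k, 1:]) g f
      = homogenize (Suc n) ([:- c n, 1:] * (\<Prod>k<n. [:- c k, 1:])) g f"
    unfolding frak_p_eq_homogenize degree_prod_linear_factors
    by (simp only: prod.lessThan_Suc mult.commute)
  also have "\<dots> = (f - smult (c n) g) * homogenize n (\<Prod>k<n. [:- c k, 1:]) g f"
    by (rule homogenize_linear_factor) (simp add: degree_prod_linear_factors)
  also have "homogenize n (\<Prod>k<n. [:- c k, 1:]) g f = frak_p (\<Prod>k<n. [:- c k, 1:]) g f"
    unfolding frak_p_eq_homogenize degree_prod_linear_factors ..
  finally show ?case
    by (simp add: Suc.IH mult.commute)
qed

lemma (in field_hom) map_poly_frak_p: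
  "map_poly hom (frak_p q g f) = frak_p (map_poly hom q) (map_poly hom g) (map_poly hom f)"
proof -
  interpret map_poly_hom: map_poly_inj_idom_hom hom ..
  show ?thesis
    unfolding frak_p_def
    by (simp add: map_poly_hom.hom_sum map_poly_hom_smult map_poly_hom.hom_mult map_poly_hom.hom_power)
qed

section \<open>Coprimality over a field\<close>

lemma coprime_if_bezout:
  fixes a b :: "'a::algebraic_semidom"
  assumes "u * a + v * b = 1"
  shows "coprime a b"
proof (rule coprimeI)
  fix d assume "d dvd a" "d dvd b"
  then have "d dvd u * a + v * b"
    by (intro dvd_add dvd_mult)
  then show "is_unit d"
    by (simp add: assms)
qed

lemma field_poly_common_divisor_combination:
  fixes p q :: "'a::field poly"
  shows "\<exists>u v d. u * p + v * q = d \<and> d dvd p \<and> d dvd q"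
proof (induction "euclidean_size q" arbitrary: p q rule: less_induct)
  case less
  show ?case
  proof (cases "q = 0")
    case True
    then show ?thesis
      by (intro exI[of _ 1] exI[of _ 0] exI[of _ p]) simp
  next
    case False
    then have "euclidean_size (p mod q) < euclidean_size q"
      by (rule mod_size_less)
    from less[OF this] obtain u v d
      where uvd: "u * q + v * (p mod q) = d" "d dvd q" "d dvd p mod q"
      by blast
    have "v * p + (u - v * (p div q)) * q = u * q + v * (p - p div q * q)"
      by (simp add: algebra_simps)
    also have "\<dots> = d"
      using uvd(1) by (simp add: minus_div_mult_eq_mod)
    finally have combination: "v * p + (u - v * (p div q)) * q = d" .
    have "d dvd p div q * q + p mod q"
      by (rule dvd_add[OF dvd_mult[OF uvd(2)] uvd(3)])
    then have "d dvd p"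
      by simp
    with combination uvd(2) show ?thesis
      by blast
  qed
qed

lemma field_poly_bezout:
  fixes p q :: "'a::field poly"
  assumes "coprime p q"
  obtains u v where "u * p + v * q = 1"
proof -
  obtain u v d where uvd: "u * p + v * q = d" "d dvd p" "d dvd q"
    using field_poly_common_divisor_combination by blast
  then have "is_unit d"
    using assms coprime_common_divisor by blast
  then obtain k where k: "1 = d * k"
    by (elim dvdE)
  have "(k * u) * p + (k * v) * q = k * (u * p + v * q)"
    by (simp add: algebra_simps)
  also have "\<dots> = 1"
    using uvd(1) k by (simp add: mult.commute)
  finally show ?thesis
    by (rule that)
qed

lemma field_poly_coprime_mult_left:
  fixes a b c :: "'a::field poly"
  assumes "coprime b a" "coprime c a"
  shows "coprime (b * c) a"
proof -
  obtain u1 v1 where 1: "u1 * b + v1 * a = 1"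
    using field_poly_bezout[OF assms(1)] .
  obtain u2 v2 where 2: "u2 * c + v2 * a = 1"
    using field_poly_bezout[OF assms(2)] .
  have "(u1 * u2) * (b * c) + (u1 * b * v2 + v1 * (u2 * c + v2 * a)) * a
      = (u1 * b + v1 * a) * (u2 * c + v2 * a)"
    by (simp add: algebra_simps)
  also have "\<dots> = 1"
    by (simp add: 1 2)
  finally show ?thesis
    by (rule coprime_if_bezout)
qed

lemma field_poly_coprime_prod_left:
  fixes D :: "'i \<Rightarrow> 'a::field poly"
  assumes "\<And>i. i \<in> I \<Longrightarrow> coprime (D i) a"
  shows "coprime (\<Prod>i\<in>I. D i) a"
  using assms
  by (induction I rule: infinite_finite_induct) (simp_all add: field_poly_coprime_mult_left)

lemma field_poly_divides_mult:
  fixes a b c :: "'a::field poly"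
  assumes "coprime a b" "a dvd c" "b dvd c"
  shows "a * b dvd c"
proof -
  obtain u v where uv: "u * a + v * b = 1"
    using field_poly_bezout[OF assms(1)] .
  have "a * b dvd a * c" "a * b dvd c * b"
    by (rule mult_dvd_mono; simp add: assms)+
  then have "a * b dvd u * (a * c) + v * (c * b)"
    by (blast intro: dvd_add dvd_mult)
  also have "u * (a * c) + v * (c * b) = (u * a + v * b) * c"
    by (simp add: algebra_simps)
  finally show ?thesis
    by (simp add: uv)
qed

lemma field_poly_prod_dvd:
  fixes D :: "nat \<Rightarrow> 'a::field poly"
  assumes "\<And>k. k < n \<Longrightarrow> D k dvd X"
    and "\<And>i j. i < j \<Longrightarrow> j < n \<Longrightarrow> coprime (D i) (D j)"
  shows "(\<Prod>k<n. D k) dvd X"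
  using assms
proof (induction n)
  case (Suc n)
  have "coprime (\<Prod>k<n. D k) (D n)"
    by (rule field_poly_coprime_prod_left) (simp add: Suc.prems(2))
  then show ?case
    using Suc by (simp add: field_poly_divides_mult)
qed simp

lemma coprime_diff_smult:
  fixes f g :: "'a::field poly"
  assumes "coprime f g" "\<beta> \<noteq> \<gamma>"
  shows "coprime (f - smult \<beta> g) (f - smult \<gamma> g)"
proof (rule coprimeI)
  fix d assume \<beta>: "d dvd f - smult \<beta> g" and \<gamma>: "d dvd f - smult \<gamma> g"
  have "(f - smult \<beta> g) - (f - smult \<gamma> g) = smult (\<gamma> - \<beta>) g"
    by (simp add: smult_diff_left)
  then have "d dvd g"
    using dvd_diff[OF \<beta> \<gamma>] assms(2) by (simp add: dvd_smult_iff)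
  moreover have "d dvd f"
    using dvd_add[OF \<beta> dvd_smult[OF \<open>d dvd g\<close>, of \<beta>]] by simp
  ultimately show "is_unit d"
    using assms(1) coprime_common_divisor by blast
qed

lemma (in field_hom) coprime_map_poly:
  assumes "coprime p q"
  shows "coprime (map_poly hom p) (map_poly hom q)"
proof -
  interpret map_poly_hom: map_poly_inj_idom_hom hom ..
  obtain u v where "u * p + v * q = 1"
    using field_poly_bezout[OF assms] .
  then have "map_poly hom (u * p + v * q) = 1"
    by simp
  then have "map_poly hom u * map_poly hom p + map_poly hom v * map_poly hom q = 1"
    by (simp only: map_poly_hom.hom_add map_poly_hom.hom_mult)
  then show ?thesis
    by (rule coprime_if_bezout)
qed

lemma monic_dvd_imp_eq:
  fixes p q :: "'a::idom poly"
  assumes "lead_coeff p = 1" "lead_coeff q = 1" "p dvd q" "degree q \<le> degree p"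
  shows "q = p"
proof -
  obtain c where c: "q = p * c"
    using assms(3) ..
  have "p \<noteq> 0" "c \<noteq> 0"
    using assms(1,2) c by auto
  then have "degree c = 0"
    using c assms(4) by (simp add: degree_mult_eq)
  moreover have "lead_coeff c = 1"
    using c assms(1,2) by (simp add: lead_coeff_mult)
  ultimately have "c = 1"
    using degree_0_id[of c] by (simp add: one_pCons)
  with c show ?thesis
    by simp
qed

lemma irreducible_imp_degree_pos:
  fixes p :: "'a::field poly"
  assumes "irreducible p"
  shows "0 < degree p"
  using assms irreducible_not_unit[OF assms] is_unit_iff_degree[of p] by (cases "p = 0") auto

lemma (in field_hom) irreducible_dvd_if_common_root:
  assumes "irreducible q" "poly (map_poly hom q) \<alpha> = 0" "poly (map_poly hom p) \<alpha> = 0"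
  shows "q dvd p"
proof (rule ccontr)
  assume "\<not> q dvd p"
  have "coprime q p"
  proof (rule coprimeI)
    fix d assume "d dvd q" "d dvd p"
    show "is_unit d"
    proof (rule ccontr)
      assume "\<not> is_unit d"
      with field_poly_irreducible_imp_prime[OF assms(1)] \<open>d dvd q\<close> have "q dvd d"
        by (rule prime_elemD2)
      with \<open>d dvd p\<close> \<open>\<not> q dvd p\<close> show False
        by (blast intro: dvd_trans)
    qed
  qed
  then have "coprime (map_poly hom q) (map_poly hom p)"
    by (rule coprime_map_poly)
  moreover have "[:-\<alpha>, 1:] dvd map_poly hom q" "[:-\<alpha>, 1:] dvd map_poly hom p"
    using assms(2,3) by (simp_all add: dvd_iff_poly_eq_0)
  ultimately have "is_unit [:-\<alpha>, 1:]"
    by (rule coprime_common_divisor)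
  then show False
    by (simp add: is_unit_iff_degree)
qed

section \<open>Finite fields and their extensions\<close>

lemma power_card_eq_self:
  fixes x :: "'a::{field,finite}"
  shows "x ^ CARD('a) = x"
proof (cases "x = 0")
  case False
  let ?U = "UNIV - {0 :: 'a}"
  have "(\<Prod>y\<in>?U. x * y) = (\<Prod>y\<in>?U. y)"
    by (rule prod.reindex_bij_witness[of _ "\<lambda>y. y / x" "\<lambda>y. x * y"]) (use False in auto)
  then have "x ^ card ?U * (\<Prod>y\<in>?U. y) = 1 * (\<Prod>y\<in>?U. y)"
    by (simp add: prod.distrib)
  then have unit: "x ^ card ?U = 1"
    by (subst (asm) mult_cancel_right) simp
  have "card ?U + 1 = CARD('a)"
    using finite_UNIV_card_ge_0[where ?'a = 'a] by (simp add: card_Diff_singleton)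
  then have "x ^ CARD('a) = x ^ card ?U * x"
    by (metis power_Suc2 Suc_eq_plus1)
  then show ?thesis
    by (simp only: unit mult_1_left)
qed (simp add: finite_UNIV_card_ge_0)

lemma power_card_power_eq_self:
  fixes x :: "'a::{field,finite}"
  shows "x ^ CARD('a) ^ k = x"
  by (induction k) (simp_all add: power_card_eq_self power_mult)

lemma X_plus_1_power_card:
  "([:1, 1:] :: 'a::{field,finite} poly) ^ CARD('a) = [:0, 1:] ^ CARD('a) + 1"
proof (rule poly_eqI_degree_lead_coeff[where A = UNIV and n = "CARD('a)"])
  show "coeff ([:1, 1:] ^ CARD('a)) CARD('a) = coeff (([:0, 1:] :: 'a poly) ^ CARD('a) + 1) CARD('a)"
    using finite_UNIV_card_ge_0[where ?'a = 'a] by (simp add: coeff_linear_power)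
  show "degree (([:0, 1:] :: 'a poly) ^ CARD('a) + 1) \<le> CARD('a)"
    by (rule order.trans[OF degree_add_le_max]) (simp add: degree_linear_power)
  show "poly ([:1, 1:] ^ CARD('a)) z = poly ([:0, 1:] ^ CARD('a) + 1) z" for z :: 'a
    by (simp add: power_card_eq_self add.commute)
qed (simp_all add: degree_linear_power)

lemma prod_lessThan_rotate:
  fixes G :: "nat \<Rightarrow> 'a::comm_monoid_mult"
  assumes "G r = G 0"
  shows "(\<Prod>k<r. G (Suc k)) = (\<Prod>k<r. G k)"
proof (cases r)
  case (Suc r')
  have "(\<Prod>k<Suc r'. G (Suc k)) = (\<Prod>k<r'. G (Suc k)) * G (Suc r')"
    by (rule prod.lessThan_Suc)
  also have "\<dots> = G 0 * (\<Prod>k<r'. G (Suc k))"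
    using assms Suc by (simp add: mult.commute)
  also have "\<dots> = (\<Prod>k<Suc r'. G k)"
    by (rule prod.lessThan_Suc_shift[symmetric])
  finally show ?thesis
    using Suc by simp
qed simp

definition poly_norm :: "(nat \<Rightarrow> 'a \<Rightarrow> 'a) \<Rightarrow> nat \<Rightarrow> 'a::comm_ring_1 poly \<Rightarrow> 'a poly" where
  "poly_norm \<sigma> m A = (\<Prod>k<m. map_poly (\<sigma> k) A)"

locale finite_field_extension = field_hom \<phi> for \<phi> :: "'a::{field,finite} \<Rightarrow> 'b::field" +
  fixes frob :: "nat \<Rightarrow> 'b \<Rightarrow> 'b"
  defines frob_def: "frob k x \<equiv> x ^ CARD('a) ^ k"
begin

sublocale map_poly_hom: map_poly_inj_idom_hom \<phi> ..

(* Transported from F[X] by evaluation, so that we need not know that |F| is a power of the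
  characteristic. *)
lemma power_card_add: "(x + y) ^ CARD('a) = x ^ CARD('a) + y ^ CARD('a)" for x y :: 'b
proof (cases "y = 0")
  case False
  have "map_poly \<phi> ([:1, 1:] ^ CARD('a)) = map_poly \<phi> ([:0, 1:] ^ CARD('a) + 1)"
    by (simp only: X_plus_1_power_card)
  then have "poly ([:1, 1:] ^ CARD('a)) (x / y) = poly ([:0, 1:] ^ CARD('a) + 1) (x / y)"
    by (simp add: map_poly_hom.hom_power map_poly_hom.hom_add map_poly_pCons_hom)
  then have "(x / y + 1) ^ CARD('a) = (x / y) ^ CARD('a) + 1"
    by (simp add: add.commute)
  moreover have "x + y = (x / y + 1) * y"
    using False by (simp add: field_simps)
  ultimately have "(x + y) ^ CARD('a) = ((x / y) ^ CARD('a) + 1) * y ^ CARD('a)"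
    by (simp only: power_mult_distrib)
  also have "\<dots> = (x / y * y) ^ CARD('a) + y ^ CARD('a)"
    by (simp only: distrib_right power_mult_distrib mult_1_left)
  finally show ?thesis
    using False by simp
qed (simp add: zero_power)

lemma frob_0 [simp]: "frob 0 x = x"
  by (simp add: frob_def)

lemma frob_frob: "frob j (frob k x) = frob (j + k) x"
  unfolding frob_def power_mult[symmetric] power_add[symmetric] by (simp add: add.commute)

lemma frob_add: "frob k (x + y) = frob k x + frob k y"
proof (induction k)
  case (Suc k)
  have "frob (Suc k) z = frob k z ^ CARD('a)" for z
    by (simp only: frob_def power_Suc2 power_mult)
  then show ?case
    by (simp add: Suc power_card_add)
qed simp

lemma field_hom_frob: "field_hom (frob k)"
proof unfold_locales
  show "frob k (x + y) = frob k x + frob k y" for x y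
    by (rule frob_add)
qed (simp_all add: frob_def power_mult_distrib)

lemma frob_of [simp]: "frob k (\<phi> a) = \<phi> a"
  by (simp add: frob_def power_card_power_eq_self flip: hom_power)

interpretation frob: field_hom "frob k" for k
  by (rule field_hom_frob)

interpretation frob_poly: map_poly_inj_idom_hom "frob k" for k ..

lemma frob_inj: "frob k x = frob k y \<Longrightarrow> x = y"
  by (rule frob.injectivity)

lemma map_poly_frob_0 [simp]: "map_poly (frob 0) p = p"
  by (simp add: map_poly_idI)

lemma map_poly_frob_map_poly [simp]: "map_poly (frob k) (map_poly \<phi> p) = map_poly \<phi> p"
  by (simp add: map_poly_map_poly o_def)

lemma map_poly_frob_frob: "map_poly (frob j) (map_poly (frob k) p) = map_poly (frob (j + k)) p"
  by (simp add: map_poly_map_poly o_def frob_frob)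

lemma frob_root:
  assumes "poly (map_poly \<phi> p) \<beta> = 0"
  shows "poly (map_poly \<phi> p) (frob k \<beta>) = 0"
  using frob.poly_map_poly[of k "map_poly \<phi> p" \<beta>] assms by simp

(* F = range \<phi> accounts for all |F| roots of X^|F| - X. *)
lemma frob_fixed_imp_in_range:
  assumes "frob 1 x = x"
  shows "x \<in> range \<phi>"
proof -
  define P :: "'b poly" where "P = [:0, 1:] ^ CARD('a) - [:0, 1:]"
  have "CARD('a) \<ge> 2"
    using card_mono[of UNIV "{0 :: 'a, 1}"] by simp
  then have deg: "degree P = CARD('a)"
    unfolding P_def diff_conv_add_uminus
    by (subst degree_add_eq_left) (auto simp: degree_linear_power)
  then have "P \<noteq> 0"
    by auto
  then have fin: "finite {x. poly P x = 0}" and card: "card {x. poly P x = 0} \<le> CARD('a)"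
    using poly_roots_finite card_poly_roots_bound deg by fastforce+
  have sub: "range \<phi> \<subseteq> {x. poly P x = 0}"
    unfolding P_def using frob_of[of 1] by (auto simp: frob_def)
  have "card (range \<phi>) = CARD('a)"
    using injectivity by (simp add: card_image inj_def)
  then have "card (range \<phi>) = card {x. poly P x = 0}"
    using card_mono[OF fin sub] card by linarith
  then have "range \<phi> = {x. poly P x = 0}"
    by (rule card_subset_eq[OF fin sub])
  moreover have "poly P x = 0"
    using assms unfolding P_def frob_def by simp
  ultimately show ?thesis
    by simp
qed

lemma frob_fixed_poly_in_range:
  assumes "map_poly (frob 1) P = P"
  shows "P \<in> range (map_poly \<phi>)"
proof -
  have coeff: "coeff P i \<in> range \<phi>" for i
  proof (rule frob_fixed_imp_in_range)
    have "coeff (map_poly (frob 1) P) i = coeff P i"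
      by (simp only: assms)
    then show "frob 1 (coeff P i) = coeff P i"
      by (simp add: coeff_map_poly frob_def)
  qed
  have "inv_into UNIV \<phi> 0 = 0"
    by (metis hom_zero injectivity inv_f_f inj_def)
  then have "map_poly \<phi> (map_poly (inv_into UNIV \<phi>) P) = P"
    by (intro poly_eqI) (simp add: coeff_map_poly f_inv_into_f[OF coeff])
  then show ?thesis
    by (metis rangeI)
qed

lemma frob_eq_imp_period:
  assumes "i \<le> j" "frob i x = frob j x"
  shows "frob (j - i) x = x"
proof -
  have "frob i (frob (j - i) x) = frob i x"
    using assms by (simp add: frob_frob)
  then show ?thesis
    by (rule frob_inj)
qed

lemma conjugate_factors_in_range:
  assumes "frob r \<beta> = \<beta>"
  shows "(\<Prod>k<r. [:- frob k \<beta>, 1:]) \<in> range (map_poly \<phi>)"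
proof (rule frob_fixed_poly_in_range)
  have "map_poly (frob 1) (\<Prod>k<r. [:- frob k \<beta>, 1:]) = (\<Prod>k<r. [:- frob (Suc k) \<beta>, 1:])"
    by (simp add: frob_poly.hom_prod frob.map_poly_pCons_hom frob.hom_uminus frob_frob)
  also have "\<dots> = (\<Prod>k<r. [:- frob k \<beta>, 1:])"
    by (rule prod_lessThan_rotate) (simp add: assms)
  finally show "map_poly (frob 1) (\<Prod>k<r. [:- frob k \<beta>, 1:]) = (\<Prod>k<r. [:- frob k \<beta>, 1:])" .
qed

lemma map_poly_frob_pencil:
  "map_poly (frob k) (map_poly \<phi> f - smult \<beta> (map_poly \<phi> g))
     = map_poly \<phi> f - smult (frob k \<beta>) (map_poly \<phi> g)"
  by (simp add: frob_poly.hom_minus frob.map_poly_hom_smult)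

context
  fixes q :: "'a poly" and \<alpha> :: 'b
  assumes q_irreducible: "irreducible q" and q_monic: "lead_coeff q = 1"
    and q_root: "poly (map_poly \<phi> q) \<alpha> = 0"
begin

lemma degree_q_pos: "0 < degree q"
  using q_irreducible by (rule irreducible_imp_degree_pos)

lemma frob_period_exists: "\<exists>r>0. frob r \<alpha> = \<alpha>"
proof -
  have "map_poly \<phi> q \<noteq> 0"
    using q_irreducible by auto
  then have "finite {x. poly (map_poly \<phi> q) x = 0}"
    by (rule poly_roots_finite)
  moreover have "range (\<lambda>k. frob k \<alpha>) \<subseteq> {x. poly (map_poly \<phi> q) x = 0}"
    using frob_root[OF q_root] by auto
  ultimately have "finite (range (\<lambda>k. frob k \<alpha>))"
    by (rule finite_subset[rotated])
  then have "\<not> inj (\<lambda>k. frob k \<alpha>)"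
    by (meson finite_imageD infinite_UNIV_nat)
  then obtain i j where "i < j" "frob i \<alpha> = frob j \<alpha>"
    unfolding inj_def by (metis linorder_neqE_nat)
  then show ?thesis
    by (intro exI[of _ "j - i"]) (simp add: frob_eq_imp_period)
qed

lemma card_conjugates_le_degree:
  assumes "inj_on (\<lambda>k. frob k \<alpha>) {..<r}"
  shows "r \<le> degree q"
proof -
  have "map_poly \<phi> q \<noteq> 0"
    using q_irreducible by auto
  then have "card ((\<lambda>k. frob k \<alpha>) ` {..<r}) \<le> card {x. poly (map_poly \<phi> q) x = 0}"
    using frob_root[OF q_root] by (intro card_mono poly_roots_finite) auto
  also have "\<dots> \<le> degree q"
    using card_poly_roots_bound[OF \<open>map_poly \<phi> q \<noteq> 0\<close>] by simp
  finally show ?thesis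
    using assms by (simp add: card_image)
qed

lemma conjugates_product_eq:
  assumes "0 < r" "frob r \<alpha> = \<alpha>" "inj_on (\<lambda>k. frob k \<alpha>) {..<r}"
  shows "map_poly \<phi> q = (\<Prod>k<r. [:- frob k \<alpha>, 1:])"
proof -
  define M where "M = (\<Prod>k<r. [:- frob k \<alpha>, 1:])"
  obtain M' where M': "M = map_poly \<phi> M'"
    using conjugate_factors_in_range[OF assms(2)] unfolding M_def[symmetric] by blast
  have "poly M \<alpha> = 0"
    using assms(1) unfolding M_def poly_prod by (auto intro!: bexI[of _ 0])
  then have "q dvd M'"
    using irreducible_dvd_if_common_root[OF q_irreducible q_root] M' by simp
  moreover have "lead_coeff M' = 1"
  proof -
    have "\<phi> (lead_coeff M') = lead_coeff M"
      using M' by simp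
    also have "\<dots> = \<phi> 1"
      by (simp add: M_def lead_coeff_prod)
    finally show ?thesis
      by (rule injectivity)
  qed
  moreover have "degree M' \<le> degree q"
    using M' card_conjugates_le_degree[OF assms(3)] degree_prod_linear_factors[of "\<lambda>k. frob k \<alpha>" r]
    by (simp add: M_def)
  ultimately have "M' = q"
    using q_monic by (intro monic_dvd_imp_eq)
  with M' show ?thesis
    by (simp add: M_def)
qed

lemma q_conjugates:
  shows "map_poly \<phi> q = (\<Prod>k<degree q. [:- frob k \<alpha>, 1:])"
    and "frob (degree q) \<alpha> = \<alpha>"
    and "inj_on (\<lambda>k. frob k \<alpha>) {..<degree q}"
proof -
  define r where "r = (LEAST r. 0 < r \<and> frob r \<alpha> = \<alpha>)"
  have r: "0 < r" "frob r \<alpha> = \<alpha>"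
    using LeastI_ex[OF frob_period_exists] by (auto simp: r_def)
  have no_shorter_period: "i = j" if "i \<le> j" "j < r" "frob i \<alpha> = frob j \<alpha>" for i j
  proof (rule ccontr)
    assume "i \<noteq> j"
    have "j - i < r"
      using that by linarith
    then have "\<not> (0 < j - i \<and> frob (j - i) \<alpha> = \<alpha>)"
      unfolding r_def by (rule not_less_Least)
    with \<open>i \<noteq> j\<close> that show False
      by (simp add: frob_eq_imp_period)
  qed
  have inj: "inj_on (\<lambda>k. frob k \<alpha>) {..<r}"
  proof (rule inj_onI)
    fix i j assume "i \<in> {..<r}" "j \<in> {..<r}" "frob i \<alpha> = frob j \<alpha>"
    then show "i = j"
      using no_shorter_period[of i j] no_shorter_period[of j i] by (cases "i \<le> j") auto
  qed
  have eq: "map_poly \<phi> q = (\<Prod>k<r. [:- frob k \<alpha>, 1:])"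
    by (rule conjugates_product_eq[OF r inj])
  then have "r = degree (map_poly \<phi> q)"
    by (simp add: degree_prod_linear_factors)
  then have "r = degree q"
    by simp
  with eq r inj show "map_poly \<phi> q = (\<Prod>k<degree q. [:- frob k \<alpha>, 1:])"
    and "frob (degree q) \<alpha> = \<alpha>" and "inj_on (\<lambda>k. frob k \<alpha>) {..<degree q}"
    by simp_all
qed

lemma frob_degree_eq_id:
  assumes "is_splitting_field \<phi> q"
  shows "frob (degree q) x = x"
proof -
  define K where "K = {x. frob (degree q) x = x}"
  have "is_subfield K"
    unfolding is_subfield_def K_def
    by (simp add: frob.hom_add frob.hom_mult frob.hom_uminus frob.hom_inverse)
  moreover have "range \<phi> \<subseteq> K"
    by (auto simp: K_def)
  moreover have "{x. poly (map_poly \<phi> q) x = 0} \<subseteq> K"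
  proof
    fix \<beta> assume "\<beta> \<in> {x. poly (map_poly \<phi> q) x = 0}"
    then obtain k where "\<beta> = frob k \<alpha>"
      by (auto simp: q_conjugates(1) poly_prod prod_zero_iff)
    moreover have "frob (degree q) (frob k \<alpha>) = frob k (frob (degree q) \<alpha>)"
      by (simp add: frob_frob add.commute)
    ultimately show "\<beta> \<in> K"
      using q_conjugates(2) by (simp add: K_def)
  qed
  ultimately have "K = UNIV"
    using assms unfolding is_splitting_field_def by blast
  then show ?thesis
    by (auto simp: K_def)
qed

lemma map_poly_frak_p_eq_poly_norm:
  "map_poly \<phi> (frak_p q g f) = poly_norm frob (degree q) (map_poly \<phi> f - smult \<alpha> (map_poly \<phi> g))"
proof -
  have "map_poly \<phi> (frak_p q g f) = frak_p (map_poly \<phi> q) (map_poly \<phi> g) (map_poly \<phi> f)"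
    by (rule map_poly_frak_p)
  also have "\<dots> = (\<Prod>k<degree q. map_poly \<phi> f - smult (frob k \<alpha>) (map_poly \<phi> g))"
    unfolding q_conjugates(1) by (rule frak_p_prod_linear_factors)
  also have "\<dots> = poly_norm frob (degree q) (map_poly \<phi> f - smult \<alpha> (map_poly \<phi> g))"
    by (simp add: poly_norm_def map_poly_frob_pencil)
  finally show ?thesis .
qed

lemma coprime_conjugate_pencils:
  assumes "coprime f g" "i < j" "j < degree q"
  shows "coprime (map_poly (frob i) (map_poly \<phi> f - smult \<alpha> (map_poly \<phi> g)))
                 (map_poly (frob j) (map_poly \<phi> f - smult \<alpha> (map_poly \<phi> g)))"
  unfolding map_poly_frob_pencil
proof (rule coprime_diff_smult)
  show "coprime (map_poly \<phi> f) (map_poly \<phi> g)"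
    using assms(1) by (rule coprime_map_poly)
  show "frob i \<alpha> \<noteq> frob j \<alpha>"
    using q_conjugates(3) assms(2,3) by (auto dest: inj_onD)
qed

end

lemma poly_norm_mult: "poly_norm frob m (A * B) = poly_norm frob m A * poly_norm frob m B"
  unfolding poly_norm_def by (simp add: frob_poly.hom_mult prod.distrib)

lemma degree_poly_norm: "degree (poly_norm frob m A) = m * degree A"
proof (cases "A = 0")
  case True
  then show ?thesis
    by (cases m) (simp_all add: poly_norm_def)
next
  case False
  then show ?thesis
    unfolding poly_norm_def by (subst degree_prod_eq_sum_degree) auto
qed

lemma poly_norm_eq_0_iff: "poly_norm frob m A = 0 \<longleftrightarrow> 0 < m \<and> A = 0"
  unfolding poly_norm_def by auto

lemma poly_norm_in_range:
  assumes "\<And>x. frob m x = x"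
  shows "poly_norm frob m A \<in> range (map_poly \<phi>)"
proof (rule frob_fixed_poly_in_range)
  have "map_poly (frob 1) (poly_norm frob m A) = (\<Prod>k<m. map_poly (frob (Suc k)) A)"
    unfolding poly_norm_def by (simp add: frob_poly.hom_prod map_poly_frob_frob)
  also have "\<dots> = poly_norm frob m A"
    unfolding poly_norm_def by (rule prod_lessThan_rotate) (simp add: assms map_poly_idI)
  finally show "map_poly (frob 1) (poly_norm frob m A) = poly_norm frob m A" .
qed

lemma poly_norm_dvd:
  assumes "h dvd map_poly \<phi> C"
    and "\<And>i j. i < j \<Longrightarrow> j < m \<Longrightarrow> coprime (map_poly (frob i) h) (map_poly (frob j) h)"
  shows "poly_norm frob m h dvd map_poly \<phi> C"
  unfolding poly_norm_def
proof (rule field_poly_prod_dvd)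
  show "map_poly (frob k) h dvd map_poly \<phi> C" for k
    using frob_poly.hom_dvd[OF assms(1), of k] by simp
qed (rule assms(2))

context
  fixes m :: nat and h :: "'b poly" and Q :: "'a poly"
  assumes m_pos: "0 < m" and frob_m: "\<And>x. frob m x = x"
    and norm_h: "poly_norm frob m h = map_poly \<phi> Q"
begin

lemma degree_descended_norm: "degree Q = m * degree h"
  using degree_poly_norm[of m h] by (simp add: norm_h)

lemma descended_norm_eq_0_iff: "Q = 0 \<longleftrightarrow> h = 0"
  using poly_norm_eq_0_iff[of m h] m_pos by (simp add: norm_h)

lemma irreducible_of_irreducible_descended_norm:
  assumes "irreducible Q"
  shows "irreducible h"
proof (rule irreducibleI)
  have "Q \<noteq> 0" "0 < degree Q"
    using assms irreducible_imp_degree_pos not_irreducible_zero by blast+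
  then show "h \<noteq> 0" "\<not> is_unit h"
    using descended_norm_eq_0_iff degree_descended_norm by (simp_all add: is_unit_iff_degree)
  fix A B assume AB: "h = A * B"
  obtain A' B' where A': "poly_norm frob m A = map_poly \<phi> A'"
    and B': "poly_norm frob m B = map_poly \<phi> B'"
    using poly_norm_in_range[OF frob_m, of A] poly_norm_in_range[OF frob_m, of B] by blast
  have "map_poly \<phi> Q = map_poly \<phi> (A' * B')"
    by (simp add: norm_h[symmetric] AB poly_norm_mult A' B' map_poly_hom.hom_mult)
  then have Q: "Q = A' * B'"
    by (rule map_poly_hom.injectivity)
  then have "is_unit A' \<or> is_unit B'"
    by (rule irreducibleD[OF assms])
  moreover have "degree A' = m * degree A" "degree B' = m * degree B"
    using degree_poly_norm[of m A] degree_poly_norm[of m B] by (simp_all add: A' B')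
  moreover have "A \<noteq> 0" "B \<noteq> 0" "A' \<noteq> 0" "B' \<noteq> 0"
    using AB Q \<open>h \<noteq> 0\<close> \<open>Q \<noteq> 0\<close> by auto
  ultimately show "is_unit A \<or> is_unit B"
    using m_pos by (simp add: is_unit_iff_degree)
qed

lemma descended_norm_dvd:
  assumes "\<And>i j. i < j \<Longrightarrow> j < m \<Longrightarrow> coprime (map_poly (frob i) h) (map_poly (frob j) h)"
    and "h dvd map_poly \<phi> C"
  shows "Q dvd C"
proof -
  have "poly_norm frob m h dvd map_poly \<phi> C"
    using assms(2,1) by (rule poly_norm_dvd)
  then show ?thesis
    by (simp add: norm_h dvd_map_poly_hom_imp_dvd)
qed

lemma irreducible_descended_norm:
  assumes "irreducible h"
    and "\<And>i j. i < j \<Longrightarrow> j < m \<Longrightarrow> coprime (map_poly (frob i) h) (map_poly (frob j) h)"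
  shows "irreducible Q"
proof (rule irreducibleI)
  have "Q \<noteq> 0"
    using assms(1) not_irreducible_zero descended_norm_eq_0_iff by blast
  moreover have "0 < degree Q"
    using irreducible_imp_degree_pos[OF assms(1)] m_pos by (simp add: degree_descended_norm)
  ultimately show "Q \<noteq> 0" "\<not> is_unit Q"
    by (simp_all add: is_unit_iff_degree)
  fix A B assume AB: "Q = A * B"
  have "map_poly (frob 0) h dvd poly_norm frob m h"
    unfolding poly_norm_def using m_pos by (intro dvd_prodI) auto
  then have "h dvd map_poly \<phi> A * map_poly \<phi> B"
    by (simp add: norm_h AB map_poly_hom.hom_mult)
  then have "h dvd map_poly \<phi> A \<or> h dvd map_poly \<phi> B"
    using field_poly_irreducible_imp_prime[OF assms(1)] by (simp add: prime_elem_dvd_mult_iff)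
  then have "Q dvd A \<or> Q dvd B"
    using descended_norm_dvd[OF assms(2)] by blast
  moreover have "A \<noteq> 0" "B \<noteq> 0"
    using AB \<open>Q \<noteq> 0\<close> by auto
  ultimately have "degree Q \<le> degree A \<or> degree Q \<le> degree B"
    by (elim disjE) (simp_all add: dvd_imp_degree_le)
  moreover have "degree Q = degree A + degree B"
    using AB \<open>A \<noteq> 0\<close> \<open>B \<noteq> 0\<close> by (simp add: degree_mult_eq)
  ultimately have "degree B = 0 \<or> degree A = 0"
    by linarith
  with \<open>A \<noteq> 0\<close> \<open>B \<noteq> 0\<close> show "is_unit A \<or> is_unit B"
    by (auto simp: is_unit_iff_degree)
qed

end

end

lemma field_embedding_imp_field_hom:
  assumes "field_embedding h"
  shows "field_hom h"
proof -
  have add: "h (x + y) = h x + h y" and mult: "h (x * y) = h x * h y" and one: "h 1 = 1" for x y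
    using assms unfolding field_embedding_def by auto
  have "h 0 = 0"
    using add[of 0 0] by (metis add_cancel_right_right)
  then show ?thesis
    by unfold_locales (simp_all add: add mult one)
qed

theorem mainTheorem5:
  fixes f g q :: "'a::{field,finite} poly"
    and \<phi> :: "'a \<Rightarrow> 'b::field"
    and \<alpha> :: 'b
  assumes "coprime f g"
    and "lead_coeff q = 1" and "irreducible q"
    and "frak_p q g f \<noteq> 0"
    and "is_splitting_field \<phi> q"
    and "poly (map_poly \<phi> q) \<alpha> = 0"
  shows "irreducible (frak_p q g f) \<longleftrightarrow> irreducible (map_poly \<phi> f - smult \<alpha> (map_poly \<phi> g))"
proof -
  have "field_hom \<phi>"
    using assms(5) field_embedding_imp_field_hom unfolding is_splitting_field_def by blast
  then interpret finite_field_extension \<phi> "\<lambda>k x. x ^ CARD('a) ^ k"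
    by (simp add: finite_field_extension_def)
  note descent = degree_q_pos[OF assms(3,2,6)] frob_degree_eq_id[OF assms(3,2,6,5)]
    map_poly_frak_p_eq_poly_norm[OF assms(3,2,6), symmetric]
  show ?thesis
    using irreducible_of_irreducible_descended_norm[OF descent]
      irreducible_descended_norm[OF descent _ coprime_conjugate_pencils[OF assms(3,2,6,1)]]
    by blast
qed

end
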